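(* Let $S\subseteq BS^{+}(1,3)$ be a finite set of size $k$ with coset decomposition $S=S_0\cup S_1\cup\cdots\cup S_t$, where $t\geq 2$. If $k_0=|S_0|\geq 2$ and $k_i=|S_i|=1$ for all $1\le i\le t$, then $|S^2|\geq \tfrac{7}{2}k-6$.
   Context: $BS(1,3)=\langle a,b\mid ab=ba^3\rangle$; $BS^{+}(1,3)=\{b^m a^x: m\in\mathbb{Z}_{\ge 0},\ x\in\mathbb{Z}\}$, with $(b^m a^x)(b^n a^y)=b^{m+n}a^{y+3^n x}$. $S^2=\{st: s,t\in S\}$. Coset decomposition: for a finite nonempty $S\subseteq BS^{+}(1,3)$, let $m_0<m_1<\cdots<m_t$ be the distinct integers $m\ge 0$ with $S\cap b^m a^{\mathbb Z}\neq\emptyset$; put $S_i=S\cap b^{m_i}a^{\mathbb Z}=b^{m_i}a^{A_i}$ with $A_i\subseteq\mathbb Z$ finite, and $k_i=|S_i|$. *)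

theory Defs
  imports Complex_Main
begin

text \<open>Elements of BS+(1,3): the pair (m, x) represents b^m a^x, m \<ge> 0, x integer.\<close>
type_synonym bsp = "nat \<times> int"

definition bs_mult :: "bsp \<Rightarrow> bsp \<Rightarrow> bsp" where
  "bs_mult p q = (fst p + fst q, snd q + 3 ^ (fst q) * snd p)"

definition square_set :: "bsp set \<Rightarrow> bsp set" where
  "square_set S = {bs_mult s t | s t. s \<in> S \<and> t \<in> S}"

definition levels :: "bsp set \<Rightarrow> nat set" where
  "levels S = fst ` S"

definition coset_part :: "bsp set \<Rightarrow> nat \<Rightarrow> bsp set" where
  "coset_part S m = {s \<in> S. fst s = m}"

end

theory Submission imports Defs "HOL-Library.Set_Algebras" begin

(* Write S = {m} x A union {(n, x n) | n in L}, so |A| = k0 >= 2, every level in L exceeds m and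
   |L| = t. Products are sorted by level. At level 2m lie the products S_0 S_0, i.e. A + 3^m A, of
   size at least 2 k0 - 1 (|A + B| >= |A| + |B| - 1 in an ordered group). At level m + n lie
   S_0 s_n and s_n S_0, a translate of 3^n A and a translate of A; they differ because dilation by
   3^n > 1 changes the diameter, so together they have at least k0 + 1 elements. Above all these,
   with M = Max L, the t products s_n s_M occupy the distinct levels n + M. Hence
   |S^2| >= 2 k0 - 1 + t (k0 + 1) + t, which is at least 7/2 (k0 + t) - 6 as (t - 2)(k0 - 2) >= 0. *)

lemma elt_set_plus_image: "c +o A = (+) c ` A"
  by (auto simp: elt_set_plus_def)

lemma elt_set_times_image: "c *o A = (*) c ` A"
  by (auto simp: elt_set_times_def)

lemma card_set_plus_ge:
  fixes A B :: "'a::linordered_ab_group_add set"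
  assumes "finite A" "finite B" "A \<noteq> {}" "B \<noteq> {}"
  shows "card A + card B - 1 \<le> card (A + B)"
proof -
  define X where "X = (\<lambda>a. a + Min B) ` A"
  define Y where "Y = (\<lambda>b. Max A + b) ` B"
  have "card X = card A" "card Y = card B"
    unfolding X_def Y_def by (auto intro: card_image simp: inj_on_def)
  have "X \<union> Y \<subseteq> A + B"
    using assms by (auto simp: X_def Y_def intro!: set_plus_intro Max_in Min_in)
  then have "card (X \<union> Y) \<le> card (A + B)"
    by (simp add: assms card_mono finite_set_plus)
  have "X \<inter> Y \<subseteq> {Max A + Min B}"
  proof
    fix z assume "z \<in> X \<inter> Y"
    then obtain a b where "a \<in> A" "b \<in> B" "z = a + Min B" "z = Max A + b"
      by (auto simp: X_def Y_def)
    moreover have "a \<le> Max A" "Min B \<le> b"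
      using assms \<open>a \<in> A\<close> \<open>b \<in> B\<close> by auto
    ultimately show "z \<in> {Max A + Min B}"
      by (metis add_mono antisym add_le_cancel_left singletonI order.refl)
  qed
  then have "card (X \<inter> Y) \<le> 1"
    using card_mono[of "{Max A + Min B}"] by fastforce
  moreover have "card X + card Y = card (X \<union> Y) + card (X \<inter> Y)"
    using assms by (intro card_Un_Int) (auto simp: X_def Y_def)
  ultimately show ?thesis
    using \<open>card X = card A\<close> \<open>card Y = card B\<close> \<open>card (X \<union> Y) \<le> card (A + B)\<close> by linarith
qed

lemma card_elt_set_times:
  fixes A :: "'a::idom set"
  assumes "l \<noteq> 0"
  shows "card (l *o A) = card A"
  unfolding elt_set_times_image using assms by (intro card_image) (simp add: inj_on_def)

lemma card_elt_set_plus: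
  fixes A :: "'a::group_add set"
  shows "card (c +o A) = card A"
  unfolding elt_set_plus_image by (intro card_image) (simp add: inj_on_def)

lemma translate_dilate_neq_translate:
  fixes A :: "'a::linordered_idom set"
  assumes "finite A" "card A \<ge> 2" "l > 1"
  shows "c +o (l *o A) \<noteq> d +o A"
proof
  \<comment> \<open>Dilation by \<open>l\<close> multiplies the diameter \<open>Max - Min\<close> by \<open>l\<close>, translation preserves it.\<close>
  assume eq: "c +o (l *o A) = d +o A"
  have "A \<noteq> {}" using assms by auto
  have "Min A < Max A"
  proof (rule ccontr)
    assume "\<not> Min A < Max A"
    then have "A \<subseteq> {Min A}"
      using assms \<open>A \<noteq> {}\<close> Max_ge[of A] Min_le[of A] by fastforce
    then show False
      using card_mono[of "{Min A}" A] assms by simp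
  qed
  have dilate: "c +o (l *o A) = (\<lambda>a. c + l * a) ` A"
    and translate: "d +o A = (\<lambda>a. d + a) ` A"
    by (auto simp: elt_set_plus_def elt_set_times_def)
  have "mono (\<lambda>a. c + l * a)" "mono (\<lambda>a. d + a)"
    using assms by (auto intro!: monoI)
  then have "Max (c +o (l *o A)) - Min (c +o (l *o A)) = l * (Max A - Min A)"
    and "Max (d +o A) - Min (d +o A) = Max A - Min A"
    unfolding dilate translate
    using assms \<open>A \<noteq> {}\<close> by (simp_all flip: mono_Max_commute mono_Min_commute add: algebra_simps)
  with eq have "l * (Max A - Min A) = Max A - Min A"
    by simp
  then show False
    using \<open>Min A < Max A\<close> \<open>l > 1\<close> by simp
qed

lemma card_Un_ge_Suc:
  assumes "finite X" "finite Y" "card X = n" "card Y = n" "X \<noteq> Y"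
  shows "n + 1 \<le> card (X \<union> Y)"
proof (rule ccontr)
  assume "\<not> n + 1 \<le> card (X \<union> Y)"
  then have "card (X \<union> Y) \<le> card X" "card (X \<union> Y) \<le> card Y"
    using assms by simp_all
  then have "X = X \<union> Y" "Y = X \<union> Y"
    using assms by (metis Un_upper1 Un_upper2 card_seteq finite_Un)+
  then show False
    using \<open>X \<noteq> Y\<close> by simp
qed

lemma card_translate_dilate_Un_ge:
  fixes A :: "'a::linordered_idom set"
  assumes "finite A" "card A \<ge> 2" "l > 1"
  shows "card A + 1 \<le> card (c +o (l *o A) \<union> d +o A)"
proof (rule card_Un_ge_Suc)
  show "finite (c +o (l *o A))" "finite (d +o A)"
    using assms by (simp_all add: elt_set_plus_image elt_set_times_image)
  show "card (c +o (l *o A)) = card A" "card (d +o A) = card A"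
    using assms by (simp_all add: card_elt_set_plus card_elt_set_times)
  show "c +o (l *o A) \<noteq> d +o A"
    using translate_dilate_neq_translate[OF assms] .
qed

lemma bs_mult_mem_square_set: "s \<in> S \<Longrightarrow> u \<in> S \<Longrightarrow> bs_mult s u \<in> square_set S"
  unfolding square_set_def by blast

lemma finite_square_set:
  assumes "finite S"
  shows "finite (square_set S)"
proof -
  have "square_set S = (\<lambda>(s, u). bs_mult s u) ` (S \<times> S)"
    unfolding square_set_def by auto
  then show ?thesis
    using assms by simp
qed

lemma square_set_level_double:
  assumes "{m} \<times> A \<subseteq> S"
  shows "{2 * m} \<times> (A + (3 ^ m) *o A) \<subseteq> square_set S"
proof
  fix p assume "p \<in> {2 * m} \<times> (A + (3 ^ m) *o A)"
  then obtain a a' where "p = (2 * m, a + 3 ^ m * a')" "a \<in> A" "a' \<in> A"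
    by (auto simp: elt_set_times_def elim!: set_plus_elim)
  then have "bs_mult (m, a') (m, a) \<in> square_set S"
    using assms \<open>a \<in> A\<close> by (intro bs_mult_mem_square_set) auto
  then show "p \<in> square_set S"
    using \<open>p = (2 * m, a + 3 ^ m * a')\<close> by (simp add: bs_mult_def mult_2)
qed

lemma square_set_level_mixed:
  assumes "{m} \<times> A \<subseteq> S" "(n, x) \<in> S"
  shows "{m + n} \<times> (x +o ((3 ^ n) *o A) \<union> (3 ^ m * x) +o A) \<subseteq> square_set S"
proof clarify
  fix y assume "y \<in> x +o ((3 ^ n) *o A) \<union> (3 ^ m * x) +o A"
  then obtain a where "a \<in> A" "y = x + 3 ^ n * a \<or> y = 3 ^ m * x + a"
    by (auto simp: elt_set_plus_def elt_set_times_def)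
  moreover have "bs_mult (m, a) (n, x) \<in> square_set S" "bs_mult (n, x) (m, a) \<in> square_set S"
    using assms \<open>a \<in> A\<close> by (auto intro: bs_mult_mem_square_set)
  ultimately show "(m + n, y) \<in> square_set S"
    by (auto simp: bs_mult_def add.commute)
qed

lemma card_square_set_low_levels_ge:
  fixes A :: "int set" and L :: "nat set" and x :: "nat \<Rightarrow> int"
  assumes "finite A" "card A \<ge> 2" "finite L" "\<forall>n\<in>L. m < n"
    and "finite S" "{m} \<times> A \<subseteq> S" "\<forall>n\<in>L. (n, x n) \<in> S"
  shows "2 * card A - 1 + card L * (card A + 1)
    \<le> card {p \<in> square_set S. fst p \<le> m + Max (insert m L)}"
proof -
  define D where "D = {2 * m} \<times> (A + (3 ^ m) *o A)"
  define W where "W n = {m + n} \<times> (x n +o ((3 ^ n) *o A) \<union> (3 ^ m * x n) +o A)" for n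
  have "D \<subseteq> square_set S" "\<forall>n\<in>L. W n \<subseteq> square_set S"
    using square_set_level_double[OF assms(6)] square_set_level_mixed[OF assms(6)] assms(7)
    by (simp_all add: D_def W_def)
  moreover have "\<forall>p\<in>D. fst p \<le> m + Max (insert m L)" "\<forall>n\<in>L. \<forall>p\<in>W n. fst p \<le> m + Max (insert m L)"
    using \<open>finite L\<close> by (auto simp: D_def W_def)
  ultimately have "D \<union> (\<Union>n\<in>L. W n) \<subseteq> {p \<in> square_set S. fst p \<le> m + Max (insert m L)}"
    by blast
  then have "card (D \<union> (\<Union>n\<in>L. W n)) \<le> card {p \<in> square_set S. fst p \<le> m + Max (insert m L)}"
    using assms by (intro card_mono) (simp_all add: finite_square_set)
  moreover have "finite D" "\<And>n. finite (W n)"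
    using assms by (simp_all add: D_def W_def finite_set_plus elt_set_plus_image elt_set_times_image)
  moreover have "D \<inter> (\<Union>n\<in>L. W n) = {}"
    using assms by (auto simp: D_def W_def)
  moreover have "card (\<Union>n\<in>L. W n) = (\<Sum>n\<in>L. card (W n))"
    using \<open>\<And>n. finite (W n)\<close> by (intro card_UN_disjoint) (auto simp: W_def assms)
  moreover have "2 * card A - 1 \<le> card D"
  proof -
    have "card ((3 ^ m) *o A) = card A"
      by (simp add: card_elt_set_times)
    moreover have "A \<noteq> {}" "finite ((3 ^ m) *o A)" "(3 ^ m) *o A \<noteq> {}"
      using assms by (auto simp: elt_set_times_image)
    ultimately show ?thesis
      using card_set_plus_ge[of A "(3 ^ m) *o A"] assms by (simp add: D_def card_cartesian_product)
  qed
  moreover have "card A + 1 \<le> card (W n)" if "n \<in> L" for n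
  proof -
    have "0 < n"
      using that assms(4) by auto
    then have "(1::int) < 3 ^ n"
      by (simp add: one_less_power)
    then show ?thesis
      using card_translate_dilate_Un_ge[OF \<open>finite A\<close> \<open>card A \<ge> 2\<close>]
      by (simp add: W_def card_cartesian_product)
  qed
  then have "card L * (card A + 1) \<le> (\<Sum>n\<in>L. card (W n))"
    using sum_bounded_below[of L "card A + 1" "\<lambda>n. card (W n)"] by simp
  ultimately show ?thesis
    using assms by (simp add: card_Un_disjoint)
qed

lemma card_square_set_high_levels_ge:
  assumes "finite S" "finite L" "\<forall>n\<in>L. m < n" "\<forall>n\<in>L. (n, x n) \<in> S"
  shows "card L \<le> card {p \<in> square_set S. m + Max (insert m L) < fst p}"
proof (cases "L = {}")
  case False
  define M where "M = Max L"
  have "M \<in> L" "\<forall>n\<in>L. n \<le> M"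
    using assms False by (simp_all add: M_def)
  then have "Max (insert m L) = M"
    using assms False by (simp add: M_def)
  have "\<forall>n\<in>L. bs_mult (n, x n) (M, x M) \<in> square_set S"
    using assms \<open>M \<in> L\<close> by (simp add: bs_mult_mem_square_set)
  moreover have "\<forall>n\<in>L. m + M < fst (bs_mult (n, x n) (M, x M))"
    using assms by (simp add: bs_mult_def)
  ultimately have "(\<lambda>n. bs_mult (n, x n) (M, x M)) ` L \<subseteq> {p \<in> square_set S. m + M < fst p}"
    by blast
  then have "card ((\<lambda>n. bs_mult (n, x n) (M, x M)) ` L) \<le> card {p \<in> square_set S. m + M < fst p}"
    using assms by (intro card_mono) (simp_all add: finite_square_set)
  then show ?thesis
    using \<open>Max (insert m L) = M\<close> by (simp add: bs_mult_def card_image inj_on_def)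
qed simp

lemma card_square_set_singleton_levels_ge:
  fixes A :: "int set" and L :: "nat set" and x :: "nat \<Rightarrow> int"
  assumes "finite A" "card A \<ge> 2" "finite L" "\<forall>n\<in>L. m < n"
    and S: "S = {m} \<times> A \<union> (\<lambda>n. (n, x n)) ` L"
  shows "2 * card A - 1 + card L * (card A + 2) \<le> card (square_set S)"
proof -
  define h where "h = m + Max (insert m L)"
  have bottom: "{m} \<times> A \<subseteq> S" and singletons: "\<forall>n\<in>L. (n, x n) \<in> S" and "finite S"
    using assms by (auto simp: S)
  have "2 * card A - 1 + card L * (card A + 1) \<le> card {p \<in> square_set S. fst p \<le> h}"
    unfolding h_def by (rule card_square_set_low_levels_ge[OF assms(1-4) \<open>finite S\<close> bottom singletons])
  moreover have "card L \<le> card {p \<in> square_set S. h < fst p}"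
    unfolding h_def
    by (rule card_square_set_high_levels_ge[OF \<open>finite S\<close> assms(3,4) singletons])
  moreover have "card {p \<in> square_set S. fst p \<le> h} + card {p \<in> square_set S. h < fst p}
      = card (square_set S)"
    using \<open>finite S\<close>
    by (subst card_Un_disjoint[symmetric]) (auto simp: finite_square_set intro: arg_cong[of _ _ card])
  ultimately show ?thesis
    by (simp add: algebra_simps)
qed

lemma card_snd_coset_part: "card (snd ` coset_part S m) = card (coset_part S m)"
  by (intro card_image) (auto simp: inj_on_def coset_part_def prod_eq_iff)

lemma decompose_singleton_levels:
  assumes "\<forall>n \<in> levels S - {m}. card (coset_part S n) = 1"
  obtains x where "S = {m} \<times> snd ` coset_part S m \<union> (\<lambda>n. (n, x n)) ` (levels S - {m})"
proof
  define x where "x n = snd (THE p. coset_part S n = {p})" for n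
  have singleton: "coset_part S n = {(n, x n)}" if "n \<in> levels S - {m}" for n
  proof -
    have "card (coset_part S n) = 1"
      using assms that by blast
    then obtain p where p: "coset_part S n = {p}"
      by (rule card_1_singletonE)
    moreover have "fst p = n"
      using p by (auto simp: coset_part_def)
    ultimately have "coset_part S n = {(n, snd p)}"
      by (metis prod.collapse)
    then show ?thesis
      by (simp add: x_def)
  qed
  show "S = {m} \<times> snd ` coset_part S m \<union> (\<lambda>n. (n, x n)) ` (levels S - {m})"
  proof (intro equalityI subsetI)
    fix s assume "s \<in> S"
    show "s \<in> {m} \<times> snd ` coset_part S m \<union> (\<lambda>n. (n, x n)) ` (levels S - {m})"
    proof (cases "fst s = m")
      case True
      with \<open>s \<in> S\<close> have "snd s \<in> snd ` coset_part S m"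
        by (simp add: coset_part_def)
      with True show ?thesis
        by (metis SigmaI UnI1 prod.collapse singletonI)
    next
      case False
      then have "s \<in> coset_part S (fst s)" "fst s \<in> levels S - {m}"
        using \<open>s \<in> S\<close> by (auto simp: coset_part_def levels_def)
      with singleton[of "fst s"] show ?thesis
        by auto
    qed
  next
    fix s assume "s \<in> {m} \<times> snd ` coset_part S m \<union> (\<lambda>n. (n, x n)) ` (levels S - {m})"
    with singleton show "s \<in> S"
      by (auto simp: coset_part_def)
  qed
qed

theorem lemma2p2:
  fixes S :: "bsp set" and t :: nat
  assumes "finite S"
    and "card (levels S) = t + 1"
    and "t \<ge> 2"
    and "card (coset_part S (Min (levels S))) \<ge> 2"
    and "\<forall>m \<in> levels S. m \<noteq> Min (levels S) \<longrightarrow> card (coset_part S m) = 1"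
  shows "real (card (square_set S)) \<ge> 7/2 * real (card S) - 6"
proof -
  define m where "m = Min (levels S)"
  define A where "A = snd ` coset_part S m"
  define L where "L = levels S - {m}"
  have "finite (levels S)" "levels S \<noteq> {}"
    using assms by (auto simp: levels_def)
  then have "m \<in> levels S" "\<forall>n\<in>L. m < n"
    by (auto simp: m_def L_def order.strict_iff_order)
  then have "card L = t"
    using assms \<open>finite (levels S)\<close> by (simp add: L_def)
  have "card A \<ge> 2"
    using assms(4) by (simp add: A_def m_def card_snd_coset_part)
  have "finite A" "finite L"
    using assms \<open>finite (levels S)\<close> by (simp_all add: A_def L_def coset_part_def)
  obtain x where S: "S = {m} \<times> A \<union> (\<lambda>n. (n, x n)) ` L"
    using decompose_singleton_levels[of S m] assms by (auto simp: A_def L_def m_def)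
  have "card S = card A + t"
  proof -
    have "({m} \<times> A) \<inter> (\<lambda>n. (n, x n)) ` L = {}"
      using \<open>\<forall>n\<in>L. m < n\<close> by auto
    then show ?thesis
      using \<open>finite A\<close> \<open>finite L\<close> \<open>card L = t\<close>
      by (simp add: S card_Un_disjoint card_cartesian_product card_image inj_on_def)
  qed
  moreover have "2 * card A - 1 + t * (card A + 2) \<le> card (square_set S)"
    using card_square_set_singleton_levels_ge[OF \<open>finite A\<close> \<open>card A \<ge> 2\<close> \<open>finite L\<close> \<open>\<forall>n\<in>L. m < n\<close> S]
      \<open>card L = t\<close> by simp
  then have "real (2 * card A - 1 + t * (card A + 2)) \<le> real (card (square_set S))"
    using of_nat_le_iff by blast
  then have "2 * real (card A) - 1 + real t * (real (card A) + 2) \<le> real (card (square_set S))"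
    using \<open>card A \<ge> 2\<close> by (simp add: of_nat_diff algebra_simps)
  moreover have "0 \<le> (real t - 2) * (real (card A) - 2)"
    using \<open>card A \<ge> 2\<close> \<open>t \<ge> 2\<close> by simp
  ultimately show ?thesis
    by (simp add: algebra_simps)
qed

end
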